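(* Let $\chi \in \mathbb{F}_{p^2}^\times$ such that $|\chi| \not\in \{1, 2\}$ and $|\chi| \in \mathcal{D}(p \pm 1)$. Then exactly one of $\iota_{p \pm 1}(\chi)$ or $\iota_{p \pm 1}(\chi^{-1})$ is in the lower half.
   Context: Let $p$ be an odd prime; $|\cdot|$ denotes multiplicative order in $\mathbb{F}_{p^2}^\times$, $\mathcal{D}(n)$ is the set of positive divisors of $n$, and $\mathcal{D}(p \pm 1) = \mathcal{D}(p-1) \cup \mathcal{D}(p+1)$. Write $p - 1 = p_1^{t_1} \cdots p_n^{t_n}$ with $p_1 = 2$. Fix a $\mathbb{Z}$-basis $\{g_i\}_{i=1}^n$ of $\mathbb{F}_p^\times$ with $|g_i| = p_i^{t_i}$; this gives a group isomorphism $\iota_{p-1} : \mathbb{F}_p^\times \to \bigoplus_{i=1}^n \mathbb{Z}/p_i^{t_i}\mathbb{Z}$, $\prod_{i} g_i^{r_i} \mapsto (r_1, \ldots, r_n)$. The identical construction, with $p+1 = q_1^{s_1}\cdots q_m^{s_m}$ ($q_1 = 2$) and the subgroup $E \subset \mathbb{F}_{p^2}^\times$ of order $p+1$ in place of $\mathbb{F}_p^\times$, gives $\iota_{p+1} : E \to \bigoplus_i \mathbb{Z}/q_i^{s_i}\mathbb{Z}$; $\iota_{p\pm1}$ means $\iota_{p-1}$ when $\chi \in \mathbb{F}_p^\times$ and $\iota_{p+1}$ when $\chi \in E$. Definition (lower half): with $p \pm 1 = p_1^{t_1}\cdots p_n^{t_n}$, $p_1 = 2$, let $(r_1, \ldots,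 r_n) \in \bigoplus_{i} \mathbb{Z}/p_i^{t_i}\mathbb{Z}$ be an integer array (via the isomorphism above) not representing an element of order $1$ or $2$, and let $k = \min\{j : r_j \neq 0 \text{ and } (p_j, r_j) \neq (2, 2^{t_1 - 1})\}$. The array is in the lower half if $r_k \leq p_k^{t_k}/2$. *)

theory Defs
  imports "HOL-Algebra.Algebra"
begin

(* F_p^x inside a field R of order p^2: the nonzero elements fixed by Frobenius *)
definition Fp_units :: "('a, 'b) ring_scheme \<Rightarrow> nat \<Rightarrow> 'a set" where
  "Fp_units R p = {x \<in> carrier R - {\<zero>\<^bsub>R\<^esub>}. x [^]\<^bsub>R\<^esub> p = x}"

(* E: the (unique) subgroup of order p+1 of the cyclic group F_{p^2}^x *)
definition E_units :: "('a, 'b) ring_scheme \<Rightarrow> nat \<Rightarrow> 'a set" where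
  "E_units R p = {x \<in> carrier R - {\<zero>\<^bsub>R\<^esub>}. x [^]\<^bsub>R\<^esub> (p + 1) = \<one>\<^bsub>R\<^esub>}"

definition arrays :: "nat \<Rightarrow> (nat \<Rightarrow> nat) \<Rightarrow> (nat \<Rightarrow> nat) \<Rightarrow> (nat \<Rightarrow> nat) set" where
  "arrays n ps ts = {r. (\<forall>i<n. r i < ps i ^ ts i) \<and> (\<forall>i\<ge>n. r i = 0)}"

definition basis_prod :: "('a, 'c) monoid_scheme \<Rightarrow> nat \<Rightarrow> (nat \<Rightarrow> 'a) \<Rightarrow> (nat \<Rightarrow> nat) \<Rightarrow> 'a" where
  "basis_prod G n g r = finprod G (\<lambda>i. g i [^]\<^bsub>G\<^esub> r i) {..<n}"

definition iota :: "('a, 'c) monoid_scheme \<Rightarrow> nat \<Rightarrow> (nat \<Rightarrow> nat) \<Rightarrow> (nat \<Rightarrow> nat)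
    \<Rightarrow> (nat \<Rightarrow> 'a) \<Rightarrow> 'a \<Rightarrow> (nat \<Rightarrow> nat)" where
  "iota G n ps ts g x = (THE r. r \<in> arrays n ps ts \<and> basis_prod G n g r = x)"

(* lower half; indices shifted to 0..n-1, ps 0 = 2; r_k <= p_k^{t_k}/2 written as 2 r_k <= p_k^{t_k} *)
definition lower_half :: "nat \<Rightarrow> (nat \<Rightarrow> nat) \<Rightarrow> (nat \<Rightarrow> nat) \<Rightarrow> (nat \<Rightarrow> nat) \<Rightarrow> bool" where
  "lower_half n ps ts r =
     (let k = (LEAST j. j < n \<and> r j \<noteq> 0 \<and> \<not> (ps j = 2 \<and> r j = 2 ^ (ts 0 - 1)))
      in 2 * r k \<le> ps k ^ ts k)"

end

theory Submission
  imports Defs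
begin

(* In coordinates, inversion is the negation r_i \<mapsto> (p_i^t_i - r_i) mod p_i^t_i. It keeps
   the zero entries zero and fixes the entry 2^(t_1 - 1) of the 2-component, so the arrays of
   \<chi> and \<chi>^-1 have the same index k in the lower-half test. Some index qualifies:
   otherwise the array is its own negative and \<chi>^2 = 1. At k, r_k \<noteq> p_k^t_k / 2 (the
   modulus is odd unless p_k = 2, and then the middle value 2^(t_1 - 1) is excluded), so exactly
   one of r_k and p_k^t_k - r_k is at most p_k^t_k / 2. *)

definition neg_array :: "nat \<Rightarrow> (nat \<Rightarrow> nat) \<Rightarrow> (nat \<Rightarrow> nat) \<Rightarrow> (nat \<Rightarrow> nat) \<Rightarrow> nat \<Rightarrow> nat" where
  "neg_array n ps ts r i = (if i < n then (ps i ^ ts i - r i) mod (ps i ^ ts i) else 0)"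

definition pivot_indices :: "nat \<Rightarrow> (nat \<Rightarrow> nat) \<Rightarrow> (nat \<Rightarrow> nat) \<Rightarrow> (nat \<Rightarrow> nat) \<Rightarrow> nat set" where
  "pivot_indices n ps ts r = {j. j < n \<and> r j \<noteq> 0 \<and> \<not> (ps j = 2 \<and> r j = 2 ^ (ts 0 - 1))}"

lemma lower_half_pivot:
  "lower_half n ps ts r \<longleftrightarrow>
     (let k = (LEAST j. j \<in> pivot_indices n ps ts r) in 2 * r k \<le> ps k ^ ts k)"
  by (simp add: lower_half_def pivot_indices_def)

lemma arrays_less: "r \<in> arrays n ps ts \<Longrightarrow> i < n \<Longrightarrow> r i < ps i ^ ts i"
  by (simp add: arrays_def)

lemma neg_array_in_arrays: "r \<in> arrays n ps ts \<Longrightarrow> neg_array n ps ts r \<in> arrays n ps ts"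
  by (auto simp: arrays_def neg_array_def) (metis gr_implies_not0 mod_less_divisor not_gr0)

lemma neg_array_nonzero:
  "r \<in> arrays n ps ts \<Longrightarrow> i < n \<Longrightarrow> r i \<noteq> 0 \<Longrightarrow> neg_array n ps ts r i = ps i ^ ts i - r i"
  by (simp add: arrays_def neg_array_def)
    (metis diff_less gr_zeroI less_nat_zero_code mod_less)

lemma neg_array_zero: "r i = 0 \<Longrightarrow> neg_array n ps ts r i = 0"
  by (simp add: neg_array_def)

lemma ps_eq_2_iff:
  fixes ps :: "nat \<Rightarrow> nat"
  assumes "ps 0 = 2" "inj_on ps {..<n}" "j < n"
  shows "ps j = 2 \<longleftrightarrow> j = 0"
  using assms by (auto simp: inj_on_def)

lemma pivot_indices_neg_array:
  assumes r: "r \<in> arrays n ps ts" and ps0: "ps 0 = 2" and inj: "inj_on ps {..<n}"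
  shows "pivot_indices n ps ts (neg_array n ps ts r) = pivot_indices n ps ts r"
proof -
  have "(neg_array n ps ts r j \<noteq> 0 \<and> \<not> (ps j = 2 \<and> neg_array n ps ts r j = 2 ^ (ts 0 - 1)))
        \<longleftrightarrow> (r j \<noteq> 0 \<and> \<not> (ps j = 2 \<and> r j = 2 ^ (ts 0 - 1)))" if j: "j < n" for j
  proof (cases "r j = 0")
    case True
    then show ?thesis by (simp add: neg_array_zero)
  next
    case False
    note neg = neg_array_nonzero[OF r j False]
    have less: "r j < ps j ^ ts j" using arrays_less[OF r j] .
    show ?thesis
    proof (cases "j = 0")
      case True
      then show ?thesis
        using neg less False ps0 by (cases "ts 0") auto
    qed (use neg less False ps_eq_2_iff[OF ps0 inj j] in auto)
  qed
  then show ?thesis by (auto simp: pivot_indices_def)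
qed

lemma neg_array_eq_self_if_no_pivot:
  assumes r: "r \<in> arrays n ps ts" and ps0: "ps 0 = 2" and inj: "inj_on ps {..<n}"
    and no_pivot: "pivot_indices n ps ts r = {}"
  shows "neg_array n ps ts r = r"
proof
  fix i
  show "neg_array n ps ts r i = r i"
  proof (cases "i < n \<and> r i \<noteq> 0")
    case True
    then have "i = 0" "r 0 = 2 ^ (ts 0 - 1)"
      using no_pivot ps_eq_2_iff[OF ps0 inj] by (auto simp: pivot_indices_def)
    moreover have "r 0 < 2 ^ ts 0" using arrays_less[OF r, of 0] True \<open>i = 0\<close> ps0 by simp
    ultimately show ?thesis
      using neg_array_nonzero[OF r] True ps0 by (cases "ts 0") auto
  qed (use r in \<open>auto simp: neg_array_def arrays_def\<close>)
qed

lemma pivot_not_middle: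
  assumes ps0: "ps 0 = 2" and inj: "inj_on ps {..<n}"
    and prime: "\<forall>i<n. Factorial_Ring.prime (ps i)" and k: "k \<in> pivot_indices n ps ts r"
  shows "2 * r k \<noteq> ps k ^ ts k"
proof (cases "k = 0")
  case True
  then show ?thesis using k ps0 by (cases "ts 0") (auto simp: pivot_indices_def)
next
  case False
  then have "k < n" "ps k \<noteq> 2" using k ps_eq_2_iff[OF ps0 inj] by (auto simp: pivot_indices_def)
  then have "odd (ps k ^ ts k)"
    using prime by (auto simp: prime_odd_nat prime_ge_2_nat le_neq_implies_less)
  then show ?thesis by (metis dvd_triv_left)
qed

lemma lower_half_neg_array:
  assumes r: "r \<in> arrays n ps ts" and ps0: "ps 0 = 2" and inj: "inj_on ps {..<n}"
    and prime: "\<forall>i<n. Factorial_Ring.prime (ps i)" and pivot: "pivot_indices n ps ts r \<noteq> {}"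
  shows "lower_half n ps ts (neg_array n ps ts r) \<noteq> lower_half n ps ts r"
proof -
  define k where "k = (LEAST j. j \<in> pivot_indices n ps ts r)"
  have k: "k \<in> pivot_indices n ps ts r"
    unfolding k_def using pivot by (metis LeastI ex_in_conv)
  then have "k < n" "r k \<noteq> 0" by (auto simp: pivot_indices_def)
  have "2 * r k \<noteq> ps k ^ ts k" using pivot_not_middle[OF ps0 inj prime k] .
  moreover have "r k < ps k ^ ts k" using arrays_less[OF r \<open>k < n\<close>] .
  ultimately have "(2 * (ps k ^ ts k - r k) \<le> ps k ^ ts k) \<noteq> (2 * r k \<le> ps k ^ ts k)"
    by auto
  then show ?thesis
    using neg_array_nonzero[OF r \<open>k < n\<close> \<open>r k \<noteq> 0\<close>]
    by (simp add: lower_half_pivot pivot_indices_neg_array[OF r ps0 inj] k_def[symmetric])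
qed

lemma (in comm_group) basis_prod_neg_array:
  assumes g: "\<forall>i<n. g i \<in> carrier G" and g_pow: "\<forall>i<n. g i [^] (ps i ^ ts i) = \<one>"
    and r: "r \<in> arrays n ps ts"
  shows "basis_prod G n g (neg_array n ps ts r) = inv (basis_prod G n g r)"
proof (rule inv_equality[symmetric])
  have "basis_prod G n g (neg_array n ps ts r) \<otimes> basis_prod G n g r
      = finprod G (\<lambda>i. g i [^] neg_array n ps ts r i \<otimes> g i [^] r i) {..<n}"
    unfolding basis_prod_def by (rule finprod_multf[symmetric]) (use g in auto)
  also have "\<dots> = finprod G (\<lambda>i. g i [^] (neg_array n ps ts r i + r i)) {..<n}"
    by (rule finprod_cong') (use g in \<open>auto simp: nat_pow_mult\<close>)
  also have "\<dots> = \<one>"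
  proof (rule finprod_one_eqI)
    fix i assume "i \<in> {..<n}"
    then have "r i < ps i ^ ts i" "r i \<noteq> 0 \<Longrightarrow> neg_array n ps ts r i = ps i ^ ts i - r i"
      using arrays_less[OF r] neg_array_nonzero[OF r] by auto
    then show "g i [^] (neg_array n ps ts r i + r i) = \<one>"
      using g_pow \<open>i \<in> {..<n}\<close> by (cases "r i = 0") (auto simp: neg_array_zero)
  qed
  finally show "basis_prod G n g (neg_array n ps ts r) \<otimes> basis_prod G n g r = \<one>" .
qed (auto simp: basis_prod_def g)

lemma iota_eqI:
  assumes "inj_on (basis_prod G n g) (arrays n ps ts)"
    and "r \<in> arrays n ps ts" and "basis_prod G n g r = x"
  shows "iota G n ps ts g x = r"
  unfolding iota_def by (rule the1_equality) (use assms in \<open>auto simp: inj_on_def\<close>)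

lemma iota_inverse:
  assumes "bij_betw (basis_prod G n g) (arrays n ps ts) H" and "x \<in> H"
  shows "iota G n ps ts g x \<in> arrays n ps ts" and "basis_prod G n g (iota G n ps ts g x) = x"
proof -
  obtain r where "r \<in> arrays n ps ts" "basis_prod G n g r = x"
    using assms by (auto simp: bij_betw_def)
  moreover have "iota G n ps ts g x = r"
    using iota_eqI[OF bij_betw_imp_inj_on[OF assms(1)]] calculation .
  ultimately show "iota G n ps ts g x \<in> arrays n ps ts" "basis_prod G n g (iota G n ps ts g x) = x"
    by simp_all
qed

lemma (in group) ord_1_or_2_if_inv_eq:
  assumes "x \<in> carrier G" and "inv x = x"
  shows "ord x \<in> {1, 2}"
proof -
  have "x [^] (2::nat) = \<one>"
    using assms by (simp add: numeral_2_eq_2 r_inv[symmetric])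
  then have "ord x dvd 2" using pow_eq_id assms(1) by blast
  then show ?thesis using two_is_prime_nat by (auto simp: prime_nat_iff)
qed

(* Defs refers to Ring_Divisibility.mult_of; the library proves the group axioms for the
   equal Multiplicative_Group.mult_of. *)
lemma (in field) comm_group_mult_of: "comm_group (mult_of R)"
proof -
  have "Ring_Divisibility.mult_of R = Multiplicative_Group.mult_of R"
    by (simp add: Ring_Divisibility.mult_of_def Multiplicative_Group.mult_of_def)
  then have "group (mult_of R)" by (simp only: field_mult_group)
  then show ?thesis by (rule group.group_comm_groupI) (auto simp: m_comm)
qed

theorem lemma9:
  fixes R :: "('a, 'b) ring_scheme" and p N n :: nat and ps ts :: "nat \<Rightarrow> nat"
    and g :: "nat \<Rightarrow> 'a" and H :: "'a set" and \<chi> :: 'a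
  assumes field: "field R"
    and fin: "finite (carrier R)"
    and card: "card (carrier R) = p ^ 2"
    and p: "Factorial_Ring.prime p" "odd p"
    and choice: "(N = p - 1 \<and> H = Fp_units R p) \<or> (N = p + 1 \<and> H = E_units R p)"
    and n: "n \<ge> 1"
    and ps0: "ps 0 = 2"
    and ps_prime: "\<forall>i<n. Factorial_Ring.prime (ps i)"
    and ps_inj: "inj_on ps {..<n}"
    and ts_pos: "\<forall>i<n. ts i \<ge> 1"
    and factor: "N = (\<Prod>i<n. ps i ^ ts i)"
    and g_in: "\<forall>i<n. g i \<in> H"
    and g_ord: "\<forall>i<n. group.ord (mult_of R) (g i) = ps i ^ ts i"
    and basis: "bij_betw (basis_prod (mult_of R) n g) (arrays n ps ts) H"
    and chi: "\<chi> \<in> carrier R - {\<zero>\<^bsub>R\<^esub>}"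
    and chi_ord: "group.ord (mult_of R) \<chi> \<notin> {1, 2}"
    and chi_dvd: "group.ord (mult_of R) \<chi> dvd p - 1 \<or> group.ord (mult_of R) \<chi> dvd p + 1"
    and chi_H: "\<chi> \<in> H"
  shows "lower_half n ps ts (iota (mult_of R) n ps ts g \<chi>) \<noteq>
         lower_half n ps ts (iota (mult_of R) n ps ts g (inv\<^bsub>mult_of R\<^esub> \<chi>))"
proof -
  interpret G: comm_group "mult_of R" using field by (rule field.comm_group_mult_of)
  have g: "\<forall>i<n. g i \<in> carrier (mult_of R)"
    using g_in choice by (auto simp: Fp_units_def E_units_def)
  have g_pow: "\<forall>i<n. g i [^]\<^bsub>mult_of R\<^esub> (ps i ^ ts i) = \<one>\<^bsub>mult_of R\<^esub>"
    using g g_ord G.pow_ord_eq_1 by metis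
  define r where "r = iota (mult_of R) n ps ts g \<chi>"
  have r: "r \<in> arrays n ps ts" "basis_prod (mult_of R) n g r = \<chi>"
    using iota_inverse[OF basis chi_H] by (simp_all add: r_def)
  have inv_\<chi>: "inv\<^bsub>mult_of R\<^esub> \<chi> = basis_prod (mult_of R) n g (neg_array n ps ts r)"
    using G.basis_prod_neg_array[OF g g_pow r(1)] r(2) by simp
  have "pivot_indices n ps ts r \<noteq> {}"
  proof
    assume "pivot_indices n ps ts r = {}"
    then have "inv\<^bsub>mult_of R\<^esub> \<chi> = \<chi>"
      using inv_\<chi> r neg_array_eq_self_if_no_pivot[OF r(1) ps0 ps_inj] by simp
    then show False using G.ord_1_or_2_if_inv_eq chi chi_ord by simp
  qed
  moreover have "iota (mult_of R) n ps ts g (inv\<^bsub>mult_of R\<^esub> \<chi>) = neg_array n ps ts r"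
    using iota_eqI[OF bij_betw_imp_inj_on[OF basis] neg_array_in_arrays[OF r(1)]] inv_\<chi> by simp
  ultimately show ?thesis
    using lower_half_neg_array[OF r(1) ps0 ps_inj ps_prime] by (auto simp: r_def)
qed

end
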